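(* Let $\Gamma$ be a metric graph or a tropical curve with a real structure and let $D$ be a real divisor on $\Gamma$ with $\dim|D|\ge r\ge1$. Then for each effective real divisor $E$ on $\Gamma$ with $\deg E=r$ there exists a real divisor $D'\in|D|$ with $D'\ge E$.
   Context: A metric graph is a compact connected metric space locally isometric to star-shaped sets $\{te^{2k\pi i/n}:0\le t<r\}\subset\mathbb C$; its vertices are the points of local valence $\ne2$ and its edges the components of the complement of the vertex set. A tropical curve is the union of a metric graph and finitely many unbounded edges isometric to $[0,\infty]$, each attached at its point $0$ to the metric graph. A real structure is an isometric involution $\iota$; $\overline p=\iota(p)$. A divisor on $\Gamma$ is a finite formal $\mathbb Z$-combination $D=\sum D(p)p$ of points; $\overline D(p)=D(\overline p)$ and $D$ is real if $\overline D=D$. A rational function is a continuous $f:\Gamma\to\mathbb R$ which on each edge (identified isometrically with an interval in $[0,+\infty]$) is piecewise affine with finitely many pieces and integer slopes; $\Delta(f)(p)$ is the sum of the slopes of $f$ in all directions emanating from $p$, and $\Delta(f)=\sum_p\Delta(f)(p)p$. $D_1\sim D_2$ iff $D_2-D_1=\Delta(f)$ for a rational function $f$; $|D|=\{D'\ge0:D'\sim D\}$; $\dim|D|$ is $-1$ if $|D|=\emptyset$ and otherwise the maximal $r$ such that for each effective $E$ of degree $r$ there is $D'\in|D|$ with $D'-E\ge0$. *)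

theory Defs
  imports "HOL-Analysis.Analysis"
begin

text \<open>A tropical curve is encoded by a finite model: a finite vertex set, a finite
set of edges with endpoints and lengths, and a set of legs (unbounded edges).
A bounded edge e of length len e is identified with the interval [0, len e],
0 corresponding to src e and len e to tgt e.  A leg l is identified with
[0, +infinity], 0 corresponding to src l and the point at infinity being the
vertex tgt l, which is incident to no other edge.\<close>

record ('v, 'e) tgraph =
  verts :: "'v set"
  edges :: "'e set"
  src   :: "'e \<Rightarrow> 'v"
  tgt   :: "'e \<Rightarrow> 'v"
  len   :: "'e \<Rightarrow> real"
  legs  :: "'e set"

datatype ('v, 'e) point = Vx 'v | Ed 'e real

definition adj_rel :: "('v, 'e, 'z) tgraph_scheme \<Rightarrow> ('v \<times> 'v) set" where
  "adj_rel G = (\<Union>e\<in>edges G. {(src G e, tgt G e), (tgt G e, src G e)})"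

definition trop_curve :: "('v, 'e, 'z) tgraph_scheme \<Rightarrow> bool" where
  "trop_curve G \<longleftrightarrow>
     finite (verts G) \<and> finite (edges G) \<and> verts G \<noteq> {} \<and>
     (\<forall>e\<in>edges G. src G e \<in> verts G \<and> tgt G e \<in> verts G) \<and>
     legs G \<subseteq> edges G \<and>
     (\<forall>e\<in>edges G - legs G. len G e > 0) \<and>
     (\<forall>l\<in>legs G. src G l \<noteq> tgt G l \<and>
        (\<forall>e\<in>edges G. (src G e = tgt G l \<or> tgt G e = tgt G l) \<longrightarrow> e = l)) \<and>
     (\<forall>v\<in>verts G. \<forall>w\<in>verts G. (v, w) \<in> (adj_rel G)\<^sup>*)"

definition metric_graph :: "('v, 'e, 'z) tgraph_scheme \<Rightarrow> bool" where
  "metric_graph G \<longleftrightarrow> trop_curve G \<and> legs G = {}"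

definition pts :: "('v, 'e, 'z) tgraph_scheme \<Rightarrow> ('v, 'e) point set" where
  "pts G = Vx ` verts G
     \<union> {Ed e t | e t. e \<in> edges G - legs G \<and> 0 < t \<and> t < len G e}
     \<union> {Ed l t | l t. l \<in> legs G \<and> 0 < t}"

definition epos :: "('v, 'e, 'z) tgraph_scheme \<Rightarrow> 'e \<Rightarrow> real \<Rightarrow> ('v, 'e) point" where
  "epos G e t = (if t = 0 then Vx (src G e)
                 else if e \<notin> legs G \<and> t = len G e then Vx (tgt G e)
                 else Ed e t)"

text \<open>An isometric involution, given combinatorially: an involution on vertices,
an involution on edges preserving lengths and legs, and for each edge a flag
telling whether the edge is mapped with reversed orientation.\<close>

record ('v, 'e) rstruct =
  ivert :: "'v \<Rightarrow> 'v"
  iedge :: "'e \<Rightarrow> 'e"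
  flip  :: "'e \<Rightarrow> bool"

definition real_structure ::
  "('v, 'e, 'z) tgraph_scheme \<Rightarrow> ('v, 'e, 'y) rstruct_scheme \<Rightarrow> bool" where
  "real_structure G R \<longleftrightarrow>
     (\<forall>v\<in>verts G. ivert R v \<in> verts G \<and> ivert R (ivert R v) = v) \<and>
     (\<forall>e\<in>edges G. iedge R e \<in> edges G \<and> iedge R (iedge R e) = e \<and>
        flip R (iedge R e) = flip R e \<and>
        (iedge R e \<in> legs G \<longleftrightarrow> e \<in> legs G) \<and>
        len G (iedge R e) = len G e \<and>
        (e \<in> legs G \<longrightarrow> \<not> flip R e) \<and>
        (if flip R e
         then src G (iedge R e) = ivert R (tgt G e) \<and> tgt G (iedge R e) = ivert R (src G e)
         else src G (iedge R e) = ivert R (src G e) \<and> tgt G (iedge R e) = ivert R (tgt G e)))"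

fun iota :: "('v, 'e, 'z) tgraph_scheme \<Rightarrow> ('v, 'e, 'y) rstruct_scheme \<Rightarrow>
    ('v, 'e) point \<Rightarrow> ('v, 'e) point" where
  "iota G R (Vx v) = Vx (ivert R v)"
| "iota G R (Ed e t) = (if flip R e then Ed (iedge R e) (len G e - t) else Ed (iedge R e) t)"

type_synonym ('v, 'e) divisor = "('v, 'e) point \<Rightarrow> int"

definition is_divisor :: "('v, 'e, 'z) tgraph_scheme \<Rightarrow> ('v, 'e) divisor \<Rightarrow> bool" where
  "is_divisor G D \<longleftrightarrow> finite {p. D p \<noteq> 0} \<and> {p. D p \<noteq> 0} \<subseteq> pts G"

definition deg :: "('v, 'e) divisor \<Rightarrow> int" where
  "deg D = (\<Sum>p\<in>{p. D p \<noteq> 0}. D p)"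

definition effective :: "('v, 'e) divisor \<Rightarrow> bool" where
  "effective D \<longleftrightarrow> (\<forall>p. 0 \<le> D p)"

definition conj_div :: "('v, 'e, 'z) tgraph_scheme \<Rightarrow> ('v, 'e, 'y) rstruct_scheme \<Rightarrow>
    ('v, 'e) divisor \<Rightarrow> ('v, 'e) divisor" where
  "conj_div G R D = (\<lambda>p. D (iota G R p))"

definition real_divisor :: "('v, 'e, 'z) tgraph_scheme \<Rightarrow> ('v, 'e, 'y) rstruct_scheme \<Rightarrow>
    ('v, 'e) divisor \<Rightarrow> bool" where
  "real_divisor G R D \<longleftrightarrow> (\<forall>p\<in>pts G. conj_div G R D p = D p)"

definition pw_affine_int :: "real set \<Rightarrow> (real \<Rightarrow> real) \<Rightarrow> bool" where
  "pw_affine_int P g \<longleftrightarrow>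
     (\<forall>a\<in>P. \<forall>b\<in>P. a < b \<and> {a<..<b} \<inter> P = {} \<longrightarrow>
        (\<exists>c (m::int). \<forall>t\<in>{a..b}. g t = c + of_int m * t))"

definition rational_fn :: "('v, 'e, 'z) tgraph_scheme \<Rightarrow> (('v, 'e) point \<Rightarrow> real) \<Rightarrow> bool" where
  "rational_fn G f \<longleftrightarrow>
     (\<forall>e\<in>edges G - legs G. \<exists>P. finite P \<and> {0, len G e} \<subseteq> P \<and> P \<subseteq> {0..len G e} \<and>
        pw_affine_int P (\<lambda>t. f (epos G e t))) \<and>
     (\<forall>l\<in>legs G. \<exists>P. finite P \<and> 0 \<in> P \<and> P \<subseteq> {0..} \<and>
        pw_affine_int P (\<lambda>t. f (epos G l t)) \<and>
        (\<exists>c (m::int). \<forall>t\<in>{Max P..}. f (epos G l t) = c + of_int m * t) \<and>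
        ((\<lambda>t. f (epos G l t)) \<longlongrightarrow> f (Vx (tgt G l))) at_top)"

definition rslope :: "(real \<Rightarrow> real) \<Rightarrow> real \<Rightarrow> real" where
  "rslope g t = (THE m. (g has_real_derivative m) (at_right t))"

definition slope_at_top :: "(real \<Rightarrow> real) \<Rightarrow> real" where
  "slope_at_top g = (THE m. \<forall>\<^sub>F t in at_top. (g has_real_derivative m) (at t))"

text \<open>Laplacian: sum of outgoing slopes in all directions emanating from a point.\<close>

fun lap :: "('v, 'e, 'z) tgraph_scheme \<Rightarrow> (('v, 'e) point \<Rightarrow> real) \<Rightarrow> ('v, 'e) point \<Rightarrow> real" where
  "lap G f (Vx v) =
     (\<Sum>e\<in>{e\<in>edges G. src G e = v}. rslope (\<lambda>t. f (epos G e t)) 0)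
   + (\<Sum>e\<in>{e\<in>edges G - legs G. tgt G e = v}. rslope (\<lambda>s. f (epos G e (len G e - s))) 0)
   + (\<Sum>l\<in>{l\<in>legs G. tgt G l = v}. - slope_at_top (\<lambda>t. f (epos G l t)))"
| "lap G f (Ed e t) = rslope (\<lambda>s. f (epos G e s)) t + rslope (\<lambda>s. f (epos G e (- s))) (- t)"

definition lin_equiv :: "('v, 'e, 'z) tgraph_scheme \<Rightarrow> ('v, 'e) divisor \<Rightarrow> ('v, 'e) divisor \<Rightarrow> bool" where
  "lin_equiv G D1 D2 \<longleftrightarrow>
     (\<exists>f. rational_fn G f \<and> (\<forall>p\<in>pts G. real_of_int (D2 p - D1 p) = lap G f p))"

definition linsys :: "('v, 'e, 'z) tgraph_scheme \<Rightarrow> ('v, 'e) divisor \<Rightarrow> ('v, 'e) divisor set" where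
  "linsys G D = {D'. is_divisor G D' \<and> effective D' \<and> lin_equiv G D D'}"

definition div_dim :: "('v, 'e, 'z) tgraph_scheme \<Rightarrow> ('v, 'e) divisor \<Rightarrow> int" where
  "div_dim G D = (if linsys G D = {} then -1 else
     int (GREATEST r::nat. \<forall>E. is_divisor G E \<and> effective E \<and> deg E = int r \<longrightarrow>
            (\<exists>D'\<in>linsys G D. \<forall>p. E p \<le> D' p)))"

end

theory Submission
  imports Defs
begin

text \<open>Take D1 \<in> |D| with D1 \<ge> E and write D1 = D + \<Delta>f. The function h = max f (f \<circ> \<iota>) is
  rational and \<iota>-invariant, so D' = D + \<Delta>h is a real divisor linearly equivalent to D. Where
  f \<ge> f \<circ> \<iota>, h touches f from above, so every outgoing slope of h dominates that of f and
  D'(p) \<ge> D1(p); elsewhere D'(p) \<ge> D1(\<iota> p) in the same way. As D1 \<ge> 0 and E(\<iota> p) = E(p),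
  this gives D' \<ge> E and D' \<ge> 0.\<close>

definition int_affine_on :: "real set \<Rightarrow> (real \<Rightarrow> real) \<Rightarrow> bool" where
  "int_affine_on S g \<longleftrightarrow> (\<exists>c (m::int). \<forall>t\<in>S. g t = c + of_int m * t)"

text \<open>Unlike in pw_affine_int, the endpoints a, b range over the whole domain S rather than
  over the breakpoints, which also covers the tail of a leg beyond its last breakpoint.\<close>

definition pw_int_affine :: "real set \<Rightarrow> real set \<Rightarrow> (real \<Rightarrow> real) \<Rightarrow> bool" where
  "pw_int_affine S P g \<longleftrightarrow>
     (\<forall>a\<in>S. \<forall>b\<in>S. a < b \<and> {a<..<b} \<inter> P = {} \<longrightarrow> int_affine_on {a..b} g)"

definition slope_right :: "(real \<Rightarrow> real) \<Rightarrow> real \<Rightarrow> real \<Rightarrow> bool" where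
  "slope_right g t m \<longleftrightarrow> (\<exists>d>0. \<exists>c. \<forall>s\<in>{t..t+d}. g s = c + m * s)"

lemma int_affine_on_subset: "int_affine_on S g \<Longrightarrow> T \<subseteq> S \<Longrightarrow> int_affine_on T g"
  unfolding int_affine_on_def by blast

lemma int_affine_on_subset_singleton: "T \<subseteq> {x} \<Longrightarrow> int_affine_on T g"
  unfolding int_affine_on_def by (rule exI[of _ "g x"], rule exI[of _ 0]) auto

lemma pw_affine_int_iff: "pw_affine_int P g \<longleftrightarrow> pw_int_affine P P g"
  unfolding pw_affine_int_def pw_int_affine_def int_affine_on_def by blast

lemma pw_int_affine_mono:
  "pw_int_affine S P g \<Longrightarrow> P \<subseteq> P' \<Longrightarrow> pw_int_affine S P' g"
  unfolding pw_int_affine_def by blast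

lemma pw_int_affine_gapD:
  assumes "pw_int_affine S P g" "a \<in> S" "b \<in> S" "a < b" "{a<..<b} \<inter> P = {}"
  obtains c and m :: int where "\<forall>t\<in>{a..b}. g t = c + of_int m * t"
  using assms unfolding pw_int_affine_def int_affine_on_def by blast

lemma pw_int_affine_imp_pw_affine_int:
  "pw_int_affine S P g \<Longrightarrow> P \<subseteq> S \<Longrightarrow> pw_affine_int P g"
  unfolding pw_affine_int_iff pw_int_affine_def by blast

lemma pw_affine_int_reflect:
  assumes "finite P" "{0, L} \<subseteq> P" "P \<subseteq> {0..L}" "pw_affine_int P g"
  shows "\<exists>P'. finite P' \<and> {0, L} \<subseteq> P' \<and> P' \<subseteq> {0..L} \<and> pw_affine_int P' (\<lambda>t. g (L - t))"
proof (intro exI conjI)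
  let ?P' = "(\<lambda>t. L - t) ` P"
  show "finite ?P'" "?P' \<subseteq> {0..L}" using assms(1,3) by auto
  have "L - L \<in> ?P'" "L - 0 \<in> ?P'" using assms(2) by blast+
  then show "{0, L} \<subseteq> ?P'" by simp
  show "pw_affine_int ?P' (\<lambda>t. g (L - t))"
    unfolding pw_affine_int_def
  proof (intro ballI impI)
    fix a b assume a: "a \<in> ?P'" and b: "b \<in> ?P'" and ab: "a < b \<and> {a<..<b} \<inter> ?P' = {}"
    have "{L - b<..<L - a} \<inter> P = {}"
    proof (intro equals0I)
      fix z assume "z \<in> {L - b<..<L - a} \<inter> P"
      then have "L - z \<in> {a<..<b} \<inter> ?P'" by auto
      with ab show False by blast
    qed
    moreover have "L - a \<in> P" "L - b \<in> P" using a b by auto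
    ultimately obtain c m where cm: "\<forall>t\<in>{L-b..L-a}. g t = c + of_int (m::int) * t"
      using assms(4) ab unfolding pw_affine_int_def by force
    show "\<exists>c (m::int). \<forall>t\<in>{a..b}. g (L - t) = c + of_int m * t"
      by (rule exI[of _ "c + of_int m * L"], rule exI[of _ "-m"]) (use cm in \<open>auto simp: algebra_simps\<close>)
  qed
qed

lemma pw_affine_int_extend:
  assumes "is_interval S" "finite P" "P \<subseteq> S" "\<forall>x\<in>S. \<exists>a\<in>P. a \<le> x"
    and "pw_affine_int P g" "int_affine_on ({Max P..} \<inter> S) g"
  shows "pw_int_affine S P g"
  unfolding pw_int_affine_def
proof (intro ballI impI)
  fix a b assume ab: "a \<in> S" "b \<in> S" "a < b \<and> {a<..<b} \<inter> P = {}"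
  show "int_affine_on {a..b} g"
  proof (cases "\<exists>x\<in>P. b \<le> x")
    case False
    then have "\<forall>x\<in>P. x \<le> a" using ab by force
    then have "Max P \<le> a" using assms(2-4) ab by (subst Max_le_iff) auto
    moreover have "{a..b} \<subseteq> S" using mem_is_interval_1_I[OF assms(1) ab(1,2)] by auto
    ultimately have "{a..b} \<subseteq> {Max P..} \<inter> S" by auto
    then show ?thesis by (rule int_affine_on_subset[OF assms(6)])
  next
    case True
    define a1 where "a1 = Max {x\<in>P. x \<le> a}"
    define b1 where "b1 = Min {x\<in>P. b \<le> x}"
    have fin: "finite {x\<in>P. x \<le> a}" "finite {x\<in>P. b \<le> x}" using assms(2) by auto
    have "{x\<in>P. x \<le> a} \<noteq> {}" using assms(4) ab by blast
    then have a1: "a1 \<in> P" "a1 \<le> a" "\<forall>x\<in>P. x \<le> a \<longrightarrow> x \<le> a1"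
      using Max_in[OF fin(1)] Max_ge[OF fin(1)] unfolding a1_def by auto
    have "{x\<in>P. b \<le> x} \<noteq> {}" using True by blast
    then have b1: "b1 \<in> P" "b \<le> b1" "\<forall>x\<in>P. b \<le> x \<longrightarrow> b1 \<le> x"
      using Min_in[OF fin(2)] Min_le[OF fin(2)] unfolding b1_def by auto
    have "{a1<..<b1} \<inter> P = {}"
    proof (intro equals0I)
      fix x assume x: "x \<in> {a1<..<b1} \<inter> P"
      have "\<not> x \<le> a" "\<not> b \<le> x" using a1(3) b1(3) x by (auto simp: not_le)
      then have "x \<in> {a<..<b} \<inter> P" using x by auto
      with ab show False by blast
    qed
    then have "int_affine_on {a1..b1} g"
      using assms(5) a1 b1 ab unfolding pw_affine_int_iff pw_int_affine_def by simp
    then show ?thesis by (rule int_affine_on_subset) (use a1 b1 in auto)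
  qed
qed

lemma slope_right_rslope:
  assumes "slope_right g t m" shows "rslope g t = m"
proof -
  obtain d c where d: "d > 0" and g: "\<And>s. s \<in> {t..t+d} \<Longrightarrow> g s = c + m * s"
    using assms unfolding slope_right_def by blast
  have quotient: "\<forall>\<^sub>F y in at_right t. m = (g y - g t) / (y - t)"
  proof (rule eventually_at_rightI[where b = "t + d"])
    fix y assume "y \<in> {t<..<t+d}"
    then show "m = (g y - g t) / (y - t)" using g[of y] g[of t] d by (simp add: field_simps)
  qed (use d in simp)
  have deriv: "(g has_real_derivative m) (at_right t)"
    unfolding has_field_derivative_iff by (rule Lim_transform_eventually[OF tendsto_const quotient])
  show ?thesis
    unfolding rslope_def
  proof (rule the_equality)
    show "(g has_real_derivative m) (at_right t)" by (rule deriv)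
    fix m' assume "(g has_real_derivative m') (at_right t)"
    with deriv show "m' = m"
      unfolding has_field_derivative_iff using tendsto_unique trivial_limit_at_right_real by blast
  qed
qed

lemma slope_right_le:
  assumes "slope_right u t mu" "slope_right w t mw" "w t = u t" "\<And>s. w s \<le> u s"
  shows "mw \<le> mu"
proof -
  obtain d1 c1 where d1: "d1 > 0" and u: "\<And>s. s \<in> {t..t+d1} \<Longrightarrow> u s = c1 + mu * s"
    using assms(1) unfolding slope_right_def by blast
  obtain d2 c2 where d2: "d2 > 0" and w: "\<And>s. s \<in> {t..t+d2} \<Longrightarrow> w s = c2 + mw * s"
    using assms(2) unfolding slope_right_def by blast
  define s where "s = t + min d1 d2"
  have "s > t" using d1 d2 by (simp add: s_def)
  have "w s - w t \<le> u s - u t" using assms(3,4) by simp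
  also have "u s - u t = mu * (s - t)" using u[of s] u[of t] d1 d2 by (simp add: s_def algebra_simps)
  also have "w s - w t = mw * (s - t)" using w[of s] w[of t] d1 d2 by (simp add: s_def algebra_simps)
  finally show ?thesis using \<open>s > t\<close> by simp
qed

lemma affine_slope_right:
  assumes "\<forall>s\<in>{a..b}. g s = c + m * s" "a \<le> t" "t < b"
  shows "slope_right g t m"
  unfolding slope_right_def by (rule exI[of _ "b - t"]) (use assms in auto)

lemma affine_slope_left:
  assumes "\<forall>s\<in>{a..b}. g s = c + m * s" "a < t" "t \<le> b"
  shows "slope_right (\<lambda>s. g (L - s)) (L - t) (- m)"
  unfolding slope_right_def
  by (rule exI[of _ "t - a"], rule conjI, use assms in simp, rule exI[of _ "c + m * L"])
    (use assms in \<open>auto simp: algebra_simps\<close>)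

lemma finite_set_avoid_around:
  fixes P :: "real set"
  assumes "finite P" "a \<le> t" "t \<le> b"
  obtains a' b' where "a \<le> a'" "a' \<le> t" "t \<le> b'" "b' \<le> b"
    "a < t \<Longrightarrow> a' < t" "t < b \<Longrightarrow> t < b'"
    "\<And>x. a' < x \<Longrightarrow> x < b' \<Longrightarrow> x \<noteq> t \<Longrightarrow> x \<notin> P"
proof -
  obtain d where d: "d > 0" "\<And>x. x \<in> ball t d \<Longrightarrow> x \<noteq> t \<Longrightarrow> x \<notin> P"
    using finite_ball_avoid[OF open_UNIV assms(1) UNIV_I] by blast
  show ?thesis
  proof (rule that[of "max a (t - d/2)" "min b (t + d/2)"])
    fix x assume "max a (t - d/2) < x" "x < min b (t + d/2)" "x \<noteq> t"
    moreover from calculation(1,2) have "x \<in> ball t d" by (auto simp: dist_real_def)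
    ultimately show "x \<notin> P" using d(2) by blast
  qed (use assms(2,3) d(1) in auto)
qed

text \<open>Left slopes are expressed as right slopes of the reflection s \<mapsto> g (L - s), which is how
  lap measures slopes at the target end of an edge (L = len) and at interior points (L = 0).\<close>

lemma pw_int_affine_slopes:
  assumes "finite P" "pw_int_affine S P g" "{a..b} \<subseteq> S" "a \<le> t" "t \<le> b"
  shows "t < b \<Longrightarrow> \<exists>m::int. slope_right g t m"
    and "a < t \<Longrightarrow> \<exists>m::int. slope_right (\<lambda>s. g (L - s)) (L - t) m"
    and "a < t \<Longrightarrow> t < b \<Longrightarrow> t \<notin> P \<Longrightarrow>
      \<exists>m::int. slope_right g t m \<and> slope_right (\<lambda>s. g (L - s)) (L - t) (- m)"
proof -
  obtain a' b' where ab': "a \<le> a'" "a' \<le> t" "t \<le> b'" "b' \<le> b"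
    "a < t \<Longrightarrow> a' < t" "t < b \<Longrightarrow> t < b'"
    and avoid: "\<And>x. a' < x \<Longrightarrow> x < b' \<Longrightarrow> x \<noteq> t \<Longrightarrow> x \<notin> P"
    using finite_set_avoid_around[OF assms(1,4,5)] by blast
  have S: "a' \<in> S" "b' \<in> S" "t \<in> S" using assms(3-5) ab'(1-4) by auto
  show "\<exists>m::int. slope_right g t m" if tb: "t < b"
  proof -
    have "{t<..<b'} \<inter> P = {}" using avoid ab'(2) by fastforce
    then obtain c m where "\<forall>s\<in>{t..b'}. g s = c + of_int (m::int) * s"
      using pw_int_affine_gapD[OF assms(2) S(3,2) ab'(6)[OF tb]] by blast
    from affine_slope_right[OF this order_refl ab'(6)[OF tb]] show ?thesis by blast
  qed
  show "\<exists>m::int. slope_right (\<lambda>s. g (L - s)) (L - t) m" if at: "a < t"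
  proof -
    have "{a'<..<t} \<inter> P = {}" using avoid ab'(3) by fastforce
    then obtain c m where "\<forall>s\<in>{a'..t}. g s = c + of_int (m::int) * s"
      using pw_int_affine_gapD[OF assms(2) S(1,3) ab'(5)[OF at]] by blast
    from affine_slope_left[OF this ab'(5)[OF at] order_refl, of L]
    have "slope_right (\<lambda>s. g (L - s)) (L - t) (of_int (- m))" by simp
    then show ?thesis by blast
  qed
  show "\<exists>m::int. slope_right g t m \<and> slope_right (\<lambda>s. g (L - s)) (L - t) (- m)"
    if "a < t" "t < b" "t \<notin> P"
  proof -
    have lt: "a' < t" "t < b'" using ab'(5,6) that(1,2) by auto
    have "{a'<..<b'} \<inter> P = {}" using avoid \<open>t \<notin> P\<close> by fastforce
    then obtain c m where "\<forall>s\<in>{a'..b'}. g s = c + of_int (m::int) * s"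
      using pw_int_affine_gapD[OF assms(2) S(1,2)] lt by (metis order.strict_trans)
    with affine_slope_right[OF this less_imp_le[OF lt(1)] lt(2)]
      affine_slope_left[OF this lt(1) less_imp_le[OF lt(2)], of L]
    show ?thesis by blast
  qed
qed

lemma affine_sign_change:
  fixes c m t1 t2 :: real
  assumes "c + m * t1 < 0" "0 < c + m * t2"
  shows "m \<noteq> 0" "min t1 t2 < - c / m" "- c / m < max t1 t2"
proof -
  show m: "m \<noteq> 0" using assms by auto
  have "m * (t1 + c / m) < 0" "0 < m * (t2 + c / m)"
    using assms m by (simp_all add: algebra_simps)
  then show "min t1 t2 < - c / m" "- c / m < max t1 t2"
    by (auto simp: mult_less_0_iff zero_less_mult_iff)
qed

text \<open>Two affine pieces cross at most once, so a crossing is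
  determined by the breakpoint just below it; hence there are finitely many.\<close>

definition crossings :: "real set \<Rightarrow> real set \<Rightarrow> (real \<Rightarrow> real) \<Rightarrow> (real \<Rightarrow> real) \<Rightarrow> real set" where
  "crossings S P g1 g2 = {x\<in>S. x \<notin> P \<and> g1 x = g2 x \<and>
     (\<exists>y\<in>S. g1 y \<noteq> g2 y \<and> {min x y<..<max x y} \<inter> P = {})}"

lemma crossings_eqI:
  assumes g1: "pw_int_affine S P g1" and g2: "pw_int_affine S P g2" and "P \<subseteq> S"
    and x: "x \<in> crossings S P g1 g2" and x': "x' \<in> crossings S P g1 g2" and "x \<le> x'"
    and a: "a \<in> P" "a < x" "\<forall>z\<in>P. z < x' \<longrightarrow> z \<le> a"
  shows "x = x'"
proof (rule ccontr)
  assume "x \<noteq> x'"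
  with \<open>x \<le> x'\<close> have "x < x'" by simp
  obtain y where y: "y \<in> S" "g1 y \<noteq> g2 y" "{min x y<..<max x y} \<inter> P = {}"
    using x unfolding crossings_def by blast
  have xs: "x \<in> S" "x' \<in> S" "x' \<notin> P" "g1 x = g2 x" "g1 x' = g2 x'"
    using x x' unfolding crossings_def by auto
  have "a \<le> y"
  proof (rule ccontr)
    assume "\<not> a \<le> y"
    then have "a \<in> {min x y<..<max x y} \<inter> P" using a by auto
    with y(3) show False by blast
  qed
  define B where "B = max x' y"
  have "{a<..<B} \<inter> P = {}"
  proof (intro equals0I)
    fix z assume z: "z \<in> {a<..<B} \<inter> P"
    then have "x' < z" using a(3) xs(3) by (cases "z = x'") (auto simp: not_less)
    then have "z \<in> {min x y<..<max x y} \<inter> P" using z \<open>x < x'\<close> by (auto simp: B_def)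
    with y(3) show False by blast
  qed
  moreover have "a \<in> S" "B \<in> S" "a < B" using a assms(3) xs y \<open>x < x'\<close> by (auto simp: B_def max_def)
  ultimately obtain c1 c2 and m1 m2 :: int
    where "\<forall>t\<in>{a..B}. g1 t = c1 + of_int m1 * t" "\<forall>t\<in>{a..B}. g2 t = c2 + of_int m2 * t"
    using pw_int_affine_gapD[OF g1] pw_int_affine_gapD[OF g2] by metis
  moreover have "x \<in> {a..B}" "x' \<in> {a..B}" "y \<in> {a..B}" using a \<open>a \<le> y\<close> \<open>x < x'\<close> by (auto simp: B_def)
  ultimately have "c1 + m1 * x = c2 + m2 * x" "c1 + m1 * x' = c2 + m2 * x'" "c1 + m1 * y \<noteq> c2 + m2 * y"
    using xs y(2) by auto
  then have "(m1 - m2) * (x' - x) = 0" "c1 + m1 * y \<noteq> c2 + m2 * y" by (auto simp: algebra_simps)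
  with \<open>x < x'\<close> \<open>c1 + m1 * x = c2 + m2 * x\<close> show False by simp
qed

lemma finite_crossings:
  assumes "finite P" "lo \<in> P" "S \<subseteq> {lo..}" "P \<subseteq> S"
    and g1: "pw_int_affine S P g1" and g2: "pw_int_affine S P g2"
  shows "finite (crossings S P g1 g2)"
proof -
  define C where "C = crossings S P g1 g2"
  define F where "F x = Max {a\<in>P. a < x}" for x
  have F: "F x \<in> P" "F x < x" "\<forall>z\<in>P. z < x \<longrightarrow> z \<le> F x" if "x \<in> C" for x
  proof -
    have "lo < x" using that assms(2,3) unfolding C_def crossings_def by force
    then have "{a\<in>P. a < x} \<noteq> {}" "finite {a\<in>P. a < x}" using assms(1,2) by auto
    then show "F x \<in> P" "F x < x" "\<forall>z\<in>P. z < x \<longrightarrow> z \<le> F x"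
      using Max_in Max_ge unfolding F_def by fastforce+
  qed
  have "x = x'" if "x \<in> C" "x' \<in> C" "F x = F x'" "x \<le> x'" for x x'
    using crossings_eqI[OF g1 g2 assms(4)] F that unfolding C_def by metis
  then have "inj_on F C"
    by (intro inj_onI) (metis nle_le)
  moreover have "F ` C \<subseteq> P" using F by auto
  ultimately show ?thesis using assms(1) unfolding C_def by (metis finite_imageD finite_subset)
qed

lemma pw_int_affine_max:
  assumes "is_interval S" and g1: "pw_int_affine S P g1" and g2: "pw_int_affine S P g2"
  shows "pw_int_affine S (P \<union> crossings S P g1 g2) (\<lambda>t. max (g1 t) (g2 t))"
  unfolding pw_int_affine_def
proof (intro ballI impI)
  fix a b assume ab: "a \<in> S" "b \<in> S" "a < b \<and> {a<..<b} \<inter> (P \<union> crossings S P g1 g2) = {}"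
  then obtain c1 c2 and m1 m2 :: int
    where h: "\<forall>t\<in>{a..b}. g1 t = c1 + of_int m1 * t" "\<forall>t\<in>{a..b}. g2 t = c2 + of_int m2 * t"
    using pw_int_affine_gapD[OF g1] pw_int_affine_gapD[OF g2] by (metis Int_Un_distrib Un_empty)
  have "(\<forall>t\<in>{a..b}. g2 t \<le> g1 t) \<or> (\<forall>t\<in>{a..b}. g1 t \<le> g2 t)"
  proof (rule ccontr)
    assume "\<not> ?thesis"
    then obtain t1 t2 where t: "t1 \<in> {a..b}" "t2 \<in> {a..b}" "g1 t1 < g2 t1" "g2 t2 < g1 t2"
      by (auto simp: not_le)
    define c where "c = c1 - c2"
    define m where "m = real_of_int m1 - of_int m2"
    have diff: "g1 t - g2 t = c + m * t" if "t \<in> {a..b}" for t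
      using h that by (simp add: c_def m_def algebra_simps)
    have "c + m * t1 < 0" "0 < c + m * t2" using diff[OF t(1)] diff[OF t(2)] t by auto
    note root = affine_sign_change[OF this]
    define x where "x = - c / m"
    have x: "x \<in> {a<..<b}" using root t by (auto simp: x_def)
    have "{a..b} \<subseteq> S" using mem_is_interval_1_I[OF assms(1) ab(1,2)] by auto
    then have "x \<in> S" "t2 \<in> S" using x t by auto
    moreover have "g1 x = g2 x" using diff[of x] x root(1) by (auto simp: x_def)
    moreover have "{min x t2<..<max x t2} \<subseteq> {a<..<b}" using x t by auto
    then have "{min x t2<..<max x t2} \<inter> P = {}" "x \<notin> P" using ab x by blast+
    ultimately have "x \<in> crossings S P g1 g2"
      unfolding crossings_def using t(4) by (intro CollectI conjI bexI[of _ t2]) auto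
    with ab x show False by blast
  qed
  then show "int_affine_on {a..b} (\<lambda>t. max (g1 t) (g2 t))"
    unfolding int_affine_on_def using h by (metis max.absorb1 max.absorb2)
qed

lemma eventually_affine_tendsto_imp_slope_0:
  fixes g :: "real \<Rightarrow> real"
  assumes "\<forall>t\<ge>M. g t = c + m * t" "(g \<longlongrightarrow> L) at_top"
  shows "m = 0"
proof -
  have "((\<lambda>t. g (t + 1)) \<longlongrightarrow> L) at_top"
    by (rule filterlim_compose[OF assms(2)])
      (use filterlim_tendsto_add_at_top[OF tendsto_const filterlim_ident, of 1] in \<open>simp add: add.commute\<close>)
  then have "((\<lambda>t. g (t + 1) - g t) \<longlongrightarrow> L - L) at_top"
    using assms(2) by (rule tendsto_diff)
  moreover have "\<forall>\<^sub>F t in at_top. g (t + 1) - g t = m"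
    using eventually_ge_at_top[of M] by eventually_elim (use assms(1) in \<open>simp add: algebra_simps\<close>)
  ultimately have "((\<lambda>t::real. m) \<longlongrightarrow> 0) at_top"
    by (simp add: tendsto_cong)
  then show "m = 0" by (simp add: tendsto_const_iff)
qed

lemma slope_at_top_eventually_const:
  assumes "\<forall>t\<ge>M. g t = c"
  shows "slope_at_top g = 0"
proof -
  have const: "\<forall>\<^sub>F t in at_top. (g has_real_derivative 0) (at t)"
  proof (rule eventually_mono[OF eventually_gt_at_top[of M]])
    fix t assume "M < t"
    then show "(g has_real_derivative 0) (at t)"
      by (intro has_field_derivative_transform_within_open[OF DERIV_const, where S = "{M<..}"])
        (use assms in auto)
  qed
  show ?thesis
    unfolding slope_at_top_def
  proof (rule the_equality)
    fix m assume "\<forall>\<^sub>F t in at_top. (g has_real_derivative m) (at t)"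
    then obtain t where "(g has_real_derivative m) (at t)" "(g has_real_derivative 0) (at t)"
      using eventually_happens'[OF trivial_limit_at_top_linorder eventually_conj[OF _ const]] by blast
    then show "m = 0" by (rule DERIV_unique)
  qed (rule const)
qed

definition edge_dom :: "('v, 'e, 'z) tgraph_scheme \<Rightarrow> 'e \<Rightarrow> real set" where
  "edge_dom G e = (if e \<in> legs G then {0..} else {0..len G e})"

lemma rational_fn_edge:
  assumes "rational_fn G k" "e \<in> edges G"
  obtains P where "finite P" "0 \<in> P" "P \<subseteq> edge_dom G e"
    "pw_int_affine (edge_dom G e) P (\<lambda>t. k (epos G e t))"
proof (cases "e \<in> legs G")
  case True
  then obtain P c m where P: "finite P" "0 \<in> P" "P \<subseteq> {0..}" "pw_affine_int P (\<lambda>t. k (epos G e t))"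
    and tail: "\<forall>t\<in>{Max P..}. k (epos G e t) = c + of_int (m::int) * t"
    using assms(1) unfolding rational_fn_def by blast
  have "int_affine_on ({Max P..} \<inter> {0..}) (\<lambda>t. k (epos G e t))"
    unfolding int_affine_on_def using tail by blast
  then have "pw_int_affine {0..} P (\<lambda>t. k (epos G e t))"
    using P by (intro pw_affine_int_extend) auto
  with P True show ?thesis by (intro that) (auto simp: edge_dom_def)
next
  case False
  then obtain P where P: "finite P" "{0, len G e} \<subseteq> P" "P \<subseteq> {0..len G e}"
    "pw_affine_int P (\<lambda>t. k (epos G e t))"
    using assms unfolding rational_fn_def by blast
  have "Max P = len G e" using P by (intro Max_eqI) auto
  then have "int_affine_on ({Max P..} \<inter> {0..len G e}) (\<lambda>t. k (epos G e t))"
    by (intro int_affine_on_subset_singleton) auto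
  then have "pw_int_affine {0..len G e} P (\<lambda>t. k (epos G e t))"
    using P by (intro pw_affine_int_extend) auto
  with P False show ?thesis by (intro that) (auto simp: edge_dom_def)
qed

lemma rational_fn_leg_eventually_const:
  assumes "rational_fn G k" "l \<in> legs G"
  obtains M c where "0 \<le> M" "\<forall>t\<ge>M. k (epos G l t) = c"
proof -
  obtain P c m where P: "finite P" "0 \<in> P"
    and tail: "\<forall>t\<in>{Max P..}. k (epos G l t) = c + of_int (m::int) * t"
    and lim: "((\<lambda>t. k (epos G l t)) \<longlongrightarrow> k (Vx (tgt G l))) at_top"
    using assms unfolding rational_fn_def by blast
  have "real_of_int m = 0"
    by (rule eventually_affine_tendsto_imp_slope_0[OF _ lim]) (use tail in auto)
  moreover have "0 \<le> Max P" using P by (simp add: Max_ge_iff)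
  ultimately show ?thesis using tail by (intro that[of "Max P" c]) auto
qed

lemma rational_fn_slopes:
  assumes "rational_fn G k" "e \<in> edges G"
  obtains P where "finite P"
    and "\<And>t. 0 \<le> t \<Longrightarrow> e \<in> legs G \<or> t < len G e \<Longrightarrow>
      \<exists>m::int. slope_right (\<lambda>s. k (epos G e s)) t m"
    and "\<And>t L. 0 < t \<Longrightarrow> e \<in> legs G \<or> t \<le> len G e \<Longrightarrow>
      \<exists>m::int. slope_right (\<lambda>s. k (epos G e (L - s))) (L - t) m"
    and "\<And>t. 0 < t \<Longrightarrow> e \<in> legs G \<or> t < len G e \<Longrightarrow> t \<notin> P \<Longrightarrow>
      \<exists>m::int. slope_right (\<lambda>s. k (epos G e s)) t m \<and> slope_right (\<lambda>s. k (epos G e (- s))) (- t) (- m)"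
proof -
  obtain P where P: "finite P" "pw_int_affine (edge_dom G e) P (\<lambda>t. k (epos G e t))"
    using rational_fn_edge[OF assms] by metis
  define b where "b t = (if e \<in> legs G then t + 1 else len G e)" for t
  have slopes: "{0..b t} \<subseteq> edge_dom G e" "0 \<le> t" "t \<le> b t"
    if "0 \<le> t" "e \<in> legs G \<or> t \<le> len G e" for t
    using that by (auto simp: b_def edge_dom_def)
  note pw = pw_int_affine_slopes[OF P slopes]
  show ?thesis
  proof (rule that[OF P(1)])
    show "\<exists>m::int. slope_right (\<lambda>s. k (epos G e s)) t m"
      if "0 \<le> t" "e \<in> legs G \<or> t < len G e" for t
      using pw(1)[of t] that by (auto simp: b_def)
    show "\<exists>m::int. slope_right (\<lambda>s. k (epos G e (L - s))) (L - t) m"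
      if "0 < t" "e \<in> legs G \<or> t \<le> len G e" for t L
      using pw(2)[of t] that by auto
    show "\<exists>m::int. slope_right (\<lambda>s. k (epos G e s)) t m \<and> slope_right (\<lambda>s. k (epos G e (- s))) (- t) (- m)"
      if "0 < t" "e \<in> legs G \<or> t < len G e" "t \<notin> P" for t
      using pw(3)[of t 0] that by (auto simp: b_def)
  qed
qed

lemma trop_curve_len_pos: "trop_curve G \<Longrightarrow> e \<in> edges G \<Longrightarrow> e \<notin> legs G \<Longrightarrow> 0 < len G e"
  unfolding trop_curve_def by blast

lemma trop_curve_legs_subset: "trop_curve G \<Longrightarrow> legs G \<subseteq> edges G"
  unfolding trop_curve_def by blast

lemma Vx_in_pts_iff: "Vx v \<in> pts G \<longleftrightarrow> v \<in> verts G"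
  unfolding pts_def by auto

lemma Ed_in_pts_iff:
  "trop_curve G \<Longrightarrow> Ed e t \<in> pts G \<longleftrightarrow> e \<in> edges G \<and> 0 < t \<and> (e \<in> legs G \<or> t < len G e)"
  using trop_curve_legs_subset[of G] unfolding pts_def by auto

lemma epos_interior: "0 < t \<Longrightarrow> e \<in> legs G \<or> t < len G e \<Longrightarrow> epos G e t = Ed e t"
  unfolding epos_def by auto

lemma lap_Ed_slopes:
  assumes "slope_right (\<lambda>s. k (epos G e s)) t m1" "slope_right (\<lambda>s. k (epos G e (- s))) (- t) m2"
  shows "lap G k (Ed e t) = m1 + m2"
  using assms by (simp add: slope_right_rslope)

lemma lap_Ed_int_slopes:
  assumes "trop_curve G" "rational_fn G k" "Ed e t \<in> pts G"
  obtains m1 m2 :: int where "slope_right (\<lambda>s. k (epos G e s)) t m1"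
    "slope_right (\<lambda>s. k (epos G e (- s))) (- t) m2" "lap G k (Ed e t) = of_int m1 + of_int m2"
proof -
  have e: "e \<in> edges G" "0 < t" "e \<in> legs G \<or> t < len G e"
    using assms(3) Ed_in_pts_iff[OF assms(1)] by auto
  obtain P where
    "\<exists>m::int. slope_right (\<lambda>s. k (epos G e s)) t m"
    "\<exists>m::int. slope_right (\<lambda>s. k (epos G e (0 - s))) (0 - t) m"
    using rational_fn_slopes[OF assms(2) e(1)] e by (metis less_imp_le)
  then show ?thesis using that lap_Ed_slopes by fastforce
qed

lemma lap_Ed_eq_0_off_breakpoints:
  assumes "trop_curve G" "rational_fn G k" "e \<in> edges G"
  obtains P where "finite P" "\<And>t. Ed e t \<in> pts G \<Longrightarrow> t \<notin> P \<Longrightarrow> lap G k (Ed e t) = 0"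
proof -
  obtain P where P: "finite P" "\<And>t. 0 < t \<Longrightarrow> e \<in> legs G \<or> t < len G e \<Longrightarrow> t \<notin> P \<Longrightarrow>
      \<exists>m::int. slope_right (\<lambda>s. k (epos G e s)) t m \<and> slope_right (\<lambda>s. k (epos G e (- s))) (- t) (- m)"
    using rational_fn_slopes[OF assms(2,3)] by metis
  show ?thesis
  proof (rule that[OF P(1)])
    fix t assume "Ed e t \<in> pts G" "t \<notin> P"
    then obtain m :: int where "slope_right (\<lambda>s. k (epos G e s)) t m"
      "slope_right (\<lambda>s. k (epos G e (- s))) (- t) (- real_of_int m)"
      using P(2) Ed_in_pts_iff[OF assms(1)] by fastforce
    then have "lap G k (Ed e t) = of_int m + - of_int m" by (rule lap_Ed_slopes)
    then show "lap G k (Ed e t) = 0" by simp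
  qed
qed

text \<open>A half-edge at v is an edge starting at v, or a bounded edge ending at v (flag True);
  half_edge_fn parametrises it by the distance from v.\<close>

definition half_edges :: "('v, 'e, 'z) tgraph_scheme \<Rightarrow> 'v \<Rightarrow> ('e \<times> bool) set" where
  "half_edges G v = (\<lambda>e. (e, False)) ` {e\<in>edges G. src G e = v}
     \<union> (\<lambda>e. (e, True)) ` {e\<in>edges G - legs G. tgt G e = v}"

fun half_edge_fn ::
  "('v, 'e, 'z) tgraph_scheme \<Rightarrow> (('v, 'e) point \<Rightarrow> real) \<Rightarrow> 'e \<times> bool \<Rightarrow> real \<Rightarrow> real" where
  "half_edge_fn G k (e, False) = (\<lambda>s. k (epos G e s))"
| "half_edge_fn G k (e, True) = (\<lambda>s. k (epos G e (len G e - s)))"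

lemma lap_Vx_half_edges:
  assumes "trop_curve G" "rational_fn G k"
  shows "lap G k (Vx v) = (\<Sum>h\<in>half_edges G v. rslope (half_edge_fn G k h) 0)"
proof -
  have fin: "finite (edges G)" using assms(1) unfolding trop_curve_def by blast
  have legs: "(\<Sum>l\<in>{l\<in>legs G. tgt G l = v}. - slope_at_top (\<lambda>t. k (epos G l t))) = 0"
  proof (rule sum.neutral, rule ballI)
    fix l assume "l \<in> {l\<in>legs G. tgt G l = v}"
    then obtain M c where "\<forall>t\<ge>M. k (epos G l t) = c"
      using rational_fn_leg_eventually_const[OF assms(2)] by blast
    then show "- slope_at_top (\<lambda>t. k (epos G l t)) = 0"
      by (simp add: slope_at_top_eventually_const)
  qed
  have "(\<Sum>h\<in>half_edges G v. rslope (half_edge_fn G k h) 0)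
      = (\<Sum>h\<in>(\<lambda>e. (e, False)) ` {e\<in>edges G. src G e = v}. rslope (half_edge_fn G k h) 0)
      + (\<Sum>h\<in>(\<lambda>e. (e, True)) ` {e\<in>edges G - legs G. tgt G e = v}. rslope (half_edge_fn G k h) 0)"
    unfolding half_edges_def using fin by (intro sum.union_disjoint) auto
  also have "\<dots> = (\<Sum>e\<in>{e\<in>edges G. src G e = v}. rslope (\<lambda>t. k (epos G e t)) 0)
      + (\<Sum>e\<in>{e\<in>edges G - legs G. tgt G e = v}. rslope (\<lambda>s. k (epos G e (len G e - s))) 0)"
    by (simp add: sum.reindex inj_on_def)
  finally show ?thesis using legs by simp
qed

lemma half_edge_fn_at_vertex:
  assumes "trop_curve G" "h \<in> half_edges G v"
  shows "half_edge_fn G k h 0 = k (Vx v)"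
proof -
  obtain e b where h: "h = (e, b)" and e: "e \<in> edges G"
    and b: "b \<Longrightarrow> e \<notin> legs G \<and> tgt G e = v" and nb: "\<not> b \<Longrightarrow> src G e = v"
    using assms(2) unfolding half_edges_def by auto
  have "b \<Longrightarrow> 0 < len G e" using trop_curve_len_pos[OF assms(1) e] b by blast
  then show ?thesis using h b nb by (cases b) (auto simp: epos_def)
qed

lemma half_edge_slope:
  assumes "trop_curve G" "rational_fn G k" "h \<in> half_edges G v"
  shows "\<exists>m::int. slope_right (half_edge_fn G k h) 0 m"
proof -
  obtain e b where h: "h = (e, b)" and e: "e \<in> edges G" and b: "b \<Longrightarrow> e \<notin> legs G"
    using assms(3) unfolding half_edges_def by auto
  obtain P where
    right: "\<And>t. 0 \<le> t \<Longrightarrow> e \<in> legs G \<or> t < len G e \<Longrightarrow>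
      \<exists>m::int. slope_right (\<lambda>s. k (epos G e s)) t m" and
    left: "\<And>t L. 0 < t \<Longrightarrow> e \<in> legs G \<or> t \<le> len G e \<Longrightarrow>
      \<exists>m::int. slope_right (\<lambda>s. k (epos G e (L - s))) (L - t) m"
    using rational_fn_slopes[OF assms(2) e] by metis
  have len: "e \<in> legs G \<or> 0 < len G e" using trop_curve_len_pos[OF assms(1) e] by blast
  show ?thesis
  proof (cases b)
    case True
    then show ?thesis using left[of "len G e" "len G e"] len b h by simp
  next
    case False
    then show ?thesis using right[of 0] len h by simp
  qed
qed

lemma lap_in_Ints:
  assumes "trop_curve G" "rational_fn G k" "p \<in> pts G"
  shows "lap G k p \<in> \<int>"
proof (cases p)
  case (Vx v)
  have "rslope (half_edge_fn G k h) 0 \<in> \<int>" if "h \<in> half_edges G v" for h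
    using half_edge_slope[OF assms(1,2) that] slope_right_rslope by force
  then show ?thesis
    unfolding Vx lap_Vx_half_edges[OF assms(1,2)] by (rule Ints_sum)
next
  case (Ed e t)
  then show ?thesis using lap_Ed_int_slopes[OF assms(1,2)] assms(3) by (metis Ints_add Ints_of_int)
qed

lemma lap_mono_touching:
  assumes "trop_curve G" "rational_fn G k" "rational_fn G h"
    and "\<And>x. k x \<le> h x" "p \<in> pts G" "k p = h p"
  shows "lap G k p \<le> lap G h p"
proof (cases p)
  case (Vx v)
  have "rslope (half_edge_fn G k he) 0 \<le> rslope (half_edge_fn G h he) 0"
    if he: "he \<in> half_edges G v" for he
  proof -
    obtain mk :: int where mk: "slope_right (half_edge_fn G k he) 0 mk"
      using half_edge_slope[OF assms(1,2) he] by blast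
    obtain mh :: int where mh: "slope_right (half_edge_fn G h he) 0 mh"
      using half_edge_slope[OF assms(1,3) he] by blast
    have "half_edge_fn G k he s \<le> half_edge_fn G h he s" for s
    proof -
      obtain e b where "he = (e, b)" by fastforce
      then show ?thesis using assms(4) by (cases b) simp_all
    qed
    moreover have "half_edge_fn G k he 0 = half_edge_fn G h he 0"
      using half_edge_fn_at_vertex[OF assms(1) he] assms(6) Vx by simp
    ultimately show ?thesis
      using slope_right_le[OF mh mk] slope_right_rslope[OF mk] slope_right_rslope[OF mh] by simp
  qed
  then show ?thesis
    unfolding Vx lap_Vx_half_edges[OF assms(1,2)] lap_Vx_half_edges[OF assms(1,3)] by (rule sum_mono)
next
  case (Ed e t)
  have at_p: "epos G e t = p"
    using assms(5) Ed Ed_in_pts_iff[OF assms(1)] by (simp add: epos_interior)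
  obtain k1 k2 :: int where k: "slope_right (\<lambda>s. k (epos G e s)) t k1"
    "slope_right (\<lambda>s. k (epos G e (- s))) (- t) k2" "lap G k (Ed e t) = of_int k1 + of_int k2"
    using lap_Ed_int_slopes[OF assms(1,2)] assms(5) Ed by metis
  obtain h1 h2 :: int where h: "slope_right (\<lambda>s. h (epos G e s)) t h1"
    "slope_right (\<lambda>s. h (epos G e (- s))) (- t) h2" "lap G h (Ed e t) = of_int h1 + of_int h2"
    using lap_Ed_int_slopes[OF assms(1,3)] assms(5) Ed by metis
  have "k1 \<le> h1" using slope_right_le[OF h(1) k(1)] assms(4,6) at_p by simp
  moreover have "k2 \<le> h2" using slope_right_le[OF h(2) k(2)] assms(4,6) at_p by simp
  ultimately show ?thesis unfolding Ed k(3) h(3) by simp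
qed

lemma lap_finite_support:
  assumes "trop_curve G" "rational_fn G k"
  shows "finite {p \<in> pts G. lap G k p \<noteq> 0}"
proof -
  have "\<forall>e\<in>edges G. \<exists>P. finite P \<and> (\<forall>t. Ed e t \<in> pts G \<and> t \<notin> P \<longrightarrow> lap G k (Ed e t) = 0)"
    using lap_Ed_eq_0_off_breakpoints[OF assms] by (metis (no_types, lifting))
  then obtain B where B: "\<And>e. e \<in> edges G \<Longrightarrow> finite (B e)"
    "\<And>e t. e \<in> edges G \<Longrightarrow> Ed e t \<in> pts G \<Longrightarrow> t \<notin> B e \<Longrightarrow> lap G k (Ed e t) = 0"
    by metis
  have "{p \<in> pts G. lap G k p \<noteq> 0} \<subseteq> Vx ` verts G \<union> (\<Union>e\<in>edges G. Ed e ` B e)"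
  proof
    fix p assume p: "p \<in> {p \<in> pts G. lap G k p \<noteq> 0}"
    show "p \<in> Vx ` verts G \<union> (\<Union>e\<in>edges G. Ed e ` B e)"
    proof (cases p)
      case (Vx v)
      then show ?thesis using p by (auto simp: Vx_in_pts_iff)
    next
      case (Ed e t)
      then have "e \<in> edges G" using p Ed_in_pts_iff[OF assms(1)] by auto
      then show ?thesis using p B(2) Ed by fastforce
    qed
  qed
  moreover have "finite (verts G)" "finite (edges G)" using assms(1) unfolding trop_curve_def by auto
  ultimately show ?thesis using B(1) by (auto intro: finite_subset)
qed

lemma rational_fn_max_on_edge:
  assumes "rational_fn G f" "rational_fn G g" "e \<in> edges G" "finite X" "X \<subseteq> edge_dom G e"
  obtains P where "finite P" "0 \<in> P" "X \<subseteq> P" "P \<subseteq> edge_dom G e"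
    "pw_int_affine (edge_dom G e) P (\<lambda>t. max (f (epos G e t)) (g (epos G e t)))"
proof -
  obtain P1 where P1: "finite P1" "0 \<in> P1" "P1 \<subseteq> edge_dom G e"
    "pw_int_affine (edge_dom G e) P1 (\<lambda>t. f (epos G e t))"
    using rational_fn_edge[OF assms(1,3)] by metis
  obtain P2 where P2: "finite P2" "P2 \<subseteq> edge_dom G e"
    "pw_int_affine (edge_dom G e) P2 (\<lambda>t. g (epos G e t))"
    using rational_fn_edge[OF assms(2,3)] by metis
  have dom: "is_interval (edge_dom G e)" "edge_dom G e \<subseteq> {0..}"
    by (auto simp: edge_dom_def is_interval_cc is_interval_ci)
  have P: "finite (P1 \<union> P2)" "0 \<in> P1 \<union> P2" "P1 \<union> P2 \<subseteq> edge_dom G e"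
    using P1 P2 by auto
  have "pw_int_affine (edge_dom G e) (P1 \<union> P2) (\<lambda>t. f (epos G e t))"
    "pw_int_affine (edge_dom G e) (P1 \<union> P2) (\<lambda>t. g (epos G e t))"
    using pw_int_affine_mono[OF P1(4)] pw_int_affine_mono[OF P2(3)] by blast+
  note max = pw_int_affine_max[OF dom(1) this] and fin = finite_crossings[OF P(1,2) dom(2) P(3) this]
  define C where "C = crossings (edge_dom G e) (P1 \<union> P2) (\<lambda>t. f (epos G e t)) (\<lambda>t. g (epos G e t))"
  have C: "finite C" "C \<subseteq> edge_dom G e"
    "pw_int_affine (edge_dom G e) (P1 \<union> P2 \<union> C) (\<lambda>t. max (f (epos G e t)) (g (epos G e t)))"
    using max fin unfolding C_def crossings_def by auto
  show ?thesis
  proof (rule that[of "P1 \<union> P2 \<union> C \<union> X"])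
    show "pw_int_affine (edge_dom G e) (P1 \<union> P2 \<union> C \<union> X) (\<lambda>t. max (f (epos G e t)) (g (epos G e t)))"
      by (rule pw_int_affine_mono[OF C(3)]) blast
  qed (use P C assms(4,5) in auto)
qed

lemma rational_fn_max_on_leg:
  assumes "trop_curve G" "rational_fn G f" "rational_fn G g" "l \<in> legs G"
  obtains P c where "finite P" "0 \<in> P" "P \<subseteq> {0..}"
    "pw_affine_int P (\<lambda>t. max (f (epos G l t)) (g (epos G l t)))"
    "\<forall>t\<in>{Max P..}. max (f (epos G l t)) (g (epos G l t)) = c"
proof -
  have lE: "l \<in> edges G" using assms(4) trop_curve_legs_subset[OF assms(1)] by blast
  have dom: "edge_dom G l = {0..}" using assms(4) by (simp add: edge_dom_def)
  obtain M1 c1 where M1: "0 \<le> M1" "\<forall>t\<ge>M1. f (epos G l t) = c1"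
    using rational_fn_leg_eventually_const[OF assms(2,4)] by blast
  obtain M2 c2 where M2: "0 \<le> M2" "\<forall>t\<ge>M2. g (epos G l t) = c2"
    using rational_fn_leg_eventually_const[OF assms(3,4)] by blast
  have sub: "{M1, M2} \<subseteq> edge_dom G l" unfolding dom using M1(1) M2(1) by auto
  obtain P where P: "finite P" "0 \<in> P" "{M1, M2} \<subseteq> P" "P \<subseteq> edge_dom G l"
    "pw_int_affine (edge_dom G l) P (\<lambda>t. max (f (epos G l t)) (g (epos G l t)))"
    by (rule rational_fn_max_on_edge[OF assms(2,3) lE _ sub]) simp_all
  have "M1 \<le> Max P" "M2 \<le> Max P" using P(1,3) by (simp_all add: Max_ge)
  then have "\<forall>t\<in>{Max P..}. max (f (epos G l t)) (g (epos G l t)) = max c1 c2"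
    using M1(2) M2(2) by fastforce
  moreover have "pw_affine_int P (\<lambda>t. max (f (epos G l t)) (g (epos G l t)))"
    by (rule pw_int_affine_imp_pw_affine_int[OF P(5,4)])
  ultimately show ?thesis using P(1,2,4) dom by (intro that) simp_all
qed

lemma rational_fn_max:
  assumes "trop_curve G" "rational_fn G f" "rational_fn G g"
  shows "rational_fn G (\<lambda>x. max (f x) (g x))"
  unfolding rational_fn_def
proof (intro conjI ballI)
  fix e assume e: "e \<in> edges G - legs G"
  then have dom: "edge_dom G e = {0..len G e}" by (simp add: edge_dom_def)
  have "0 < len G e" using trop_curve_len_pos[OF assms(1)] e by blast
  then have sub: "{0, len G e} \<subseteq> edge_dom G e" unfolding dom by auto
  have eE: "e \<in> edges G" using e by blast
  obtain P where P: "finite P" "{0, len G e} \<subseteq> P" "P \<subseteq> edge_dom G e"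
    "pw_int_affine (edge_dom G e) P (\<lambda>t. max (f (epos G e t)) (g (epos G e t)))"
    by (rule rational_fn_max_on_edge[OF assms(2,3) eE _ sub]) simp_all
  show "\<exists>P. finite P \<and> {0, len G e} \<subseteq> P \<and> P \<subseteq> {0..len G e} \<and>
      pw_affine_int P (\<lambda>t. max (f (epos G e t)) (g (epos G e t)))"
  proof (intro exI[of _ P] conjI)
    show "pw_affine_int P (\<lambda>t. max (f (epos G e t)) (g (epos G e t)))"
      by (rule pw_int_affine_imp_pw_affine_int[OF P(4,3)])
  qed (use P dom in simp_all)
next
  fix l assume l: "l \<in> legs G"
  obtain P c where P: "finite P" "0 \<in> P" "P \<subseteq> {0..}"
    "pw_affine_int P (\<lambda>t. max (f (epos G l t)) (g (epos G l t)))"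
    "\<forall>t\<in>{Max P..}. max (f (epos G l t)) (g (epos G l t)) = c"
    using rational_fn_max_on_leg[OF assms l] by blast
  have "((\<lambda>t. max (f (epos G l t)) (g (epos G l t)))
      \<longlongrightarrow> max (f (Vx (tgt G l))) (g (Vx (tgt G l)))) at_top"
  proof (rule tendsto_max)
    show "((\<lambda>t. f (epos G l t)) \<longlongrightarrow> f (Vx (tgt G l))) at_top"
      using assms(2) l unfolding rational_fn_def by blast
    show "((\<lambda>t. g (epos G l t)) \<longlongrightarrow> g (Vx (tgt G l))) at_top"
      using assms(3) l unfolding rational_fn_def by blast
  qed
  then show "\<exists>P. finite P \<and> 0 \<in> P \<and> P \<subseteq> {0..} \<and>
      pw_affine_int P (\<lambda>t. max (f (epos G l t)) (g (epos G l t))) \<and>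
      (\<exists>c (m::int). \<forall>t\<in>{Max P..}. max (f (epos G l t)) (g (epos G l t)) = c + of_int m * t) \<and>
      ((\<lambda>t. max (f (epos G l t)) (g (epos G l t))) \<longlongrightarrow> max (f (Vx (tgt G l))) (g (Vx (tgt G l)))) at_top"
    using P by (intro exI[of _ P] conjI exI[of _ c] exI[of _ 0]) simp_all
qed

lemma real_structure_edgeD:
  assumes "real_structure G R" "e \<in> edges G"
  shows "iedge R e \<in> edges G" "iedge R (iedge R e) = e" "flip R (iedge R e) = flip R e"
    "iedge R e \<in> legs G \<longleftrightarrow> e \<in> legs G" "len G (iedge R e) = len G e"
    "e \<in> legs G \<Longrightarrow> \<not> flip R e"
    "flip R e \<Longrightarrow> src G (iedge R e) = ivert R (tgt G e)"
    "flip R e \<Longrightarrow> tgt G (iedge R e) = ivert R (src G e)"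
    "\<not> flip R e \<Longrightarrow> src G (iedge R e) = ivert R (src G e)"
    "\<not> flip R e \<Longrightarrow> tgt G (iedge R e) = ivert R (tgt G e)"
  using assms unfolding real_structure_def by (auto split: if_splits)

lemma real_structure_vertD:
  assumes "real_structure G R" "v \<in> verts G"
  shows "ivert R v \<in> verts G" "ivert R (ivert R v) = v"
  using assms unfolding real_structure_def by auto

lemma iota_epos_noflip:
  assumes "real_structure G R" "e \<in> edges G" "\<not> flip R e"
  shows "iota G R (epos G e t) = epos G (iedge R e) t"
  using assms real_structure_edgeD[OF assms(1,2)] by (auto simp: epos_def)

lemma iota_epos_flip:
  assumes "trop_curve G" "real_structure G R" "e \<in> edges G" "flip R e"
  shows "iota G R (epos G e t) = epos G (iedge R e) (len G e - t)"
proof -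
  note r = real_structure_edgeD[OF assms(2,3)]
  have "e \<notin> legs G" "iedge R e \<notin> legs G" using r assms(4) by auto
  moreover have "0 < len G e" using trop_curve_len_pos[OF assms(1,3)] calculation by blast
  ultimately show ?thesis using r assms(4) by (auto simp: epos_def)
qed

lemma iota_iota_epos:
  assumes "trop_curve G" "real_structure G R" "e \<in> edges G"
  shows "iota G R (iota G R (epos G e t)) = epos G e t"
proof -
  note r = real_structure_edgeD[OF assms(2,3)]
  show ?thesis
  proof (cases "flip R e")
    case True
    then show ?thesis
      using iota_epos_flip[OF assms] iota_epos_flip[OF assms(1,2) r(1)] r by simp
  next
    case False
    then show ?thesis
      using iota_epos_noflip[OF assms(2,3)] iota_epos_noflip[OF assms(2) r(1)] r by simp
  qed
qed

lemma iota_in_pts: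
  assumes "trop_curve G" "real_structure G R" "p \<in> pts G"
  shows "iota G R p \<in> pts G"
proof (cases p)
  case (Vx v)
  then show ?thesis using assms(3) real_structure_vertD[OF assms(2)] by (simp add: Vx_in_pts_iff)
next
  case (Ed e t)
  then have e: "e \<in> edges G" "0 < t" "e \<in> legs G \<or> t < len G e"
    using assms(3) Ed_in_pts_iff[OF assms(1)] by auto
  note r = real_structure_edgeD[OF assms(2) e(1)]
  show ?thesis
    using e r unfolding Ed by (cases "flip R e") (auto simp: Ed_in_pts_iff[OF assms(1)])
qed

lemma rational_fn_iota:
  assumes "trop_curve G" "real_structure G R" "rational_fn G k"
  shows "rational_fn G (\<lambda>x. k (iota G R x))"
  unfolding rational_fn_def
proof (intro conjI ballI)
  fix e assume e: "e \<in> edges G - legs G"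
  note r = real_structure_edgeD[OF assms(2), of e]
  have "iedge R e \<in> edges G - legs G" using r e by auto
  then obtain P where "finite P" "{0, len G (iedge R e)} \<subseteq> P" "P \<subseteq> {0..len G (iedge R e)}"
      "pw_affine_int P (\<lambda>t. k (epos G (iedge R e) t))"
    using assms(3) unfolding rational_fn_def by blast
  then have P: "finite P" "{0, len G e} \<subseteq> P" "P \<subseteq> {0..len G e}"
      "pw_affine_int P (\<lambda>t. k (epos G (iedge R e) t))"
    using r(5) e by simp_all
  show "\<exists>P. finite P \<and> {0, len G e} \<subseteq> P \<and> P \<subseteq> {0..len G e} \<and>
          pw_affine_int P (\<lambda>t. k (iota G R (epos G e t)))"
  proof (cases "flip R e")
    case False
    then show ?thesis using P iota_epos_noflip[OF assms(2) _ False] e by auto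
  next
    case True
    have "(\<lambda>t. k (iota G R (epos G e t))) = (\<lambda>t. k (epos G (iedge R e) (len G e - t)))"
      using iota_epos_flip[OF assms(1,2) _ True] e by simp
    then show ?thesis using pw_affine_int_reflect[OF P] by simp
  qed
next
  fix l assume l: "l \<in> legs G"
  have lE: "l \<in> edges G" using l trop_curve_legs_subset[OF assms(1)] by blast
  note r = real_structure_edgeD[OF assms(2) lE]
  have nf: "\<not> flip R l" using r(6) l by blast
  have "iedge R l \<in> legs G" using r l by blast
  then obtain P where P: "finite P \<and> 0 \<in> P \<and> P \<subseteq> {0..} \<and>
      pw_affine_int P (\<lambda>t. k (epos G (iedge R l) t)) \<and>
      (\<exists>c (m::int). \<forall>t\<in>{Max P..}. k (epos G (iedge R l) t) = c + of_int m * t) \<and>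
      ((\<lambda>t. k (epos G (iedge R l) t)) \<longlongrightarrow> k (Vx (tgt G (iedge R l)))) at_top"
    using assms(3) unfolding rational_fn_def by blast
  have on_leg: "k (iota G R (epos G l t)) = k (epos G (iedge R l) t)" for t
    using iota_epos_noflip[OF assms(2) lE nf] by simp
  have at_end: "k (iota G R (Vx (tgt G l))) = k (Vx (tgt G (iedge R l)))" using r nf by simp
  show "\<exists>P. finite P \<and> 0 \<in> P \<and> P \<subseteq> {0..} \<and>
          pw_affine_int P (\<lambda>t. k (iota G R (epos G l t))) \<and>
          (\<exists>c (m::int). \<forall>t\<in>{Max P..}. k (iota G R (epos G l t)) = c + of_int m * t) \<and>
          ((\<lambda>t. k (iota G R (epos G l t))) \<longlongrightarrow> k (iota G R (Vx (tgt G l)))) at_top"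
    unfolding on_leg at_end by (rule exI[of _ P]) (rule P)
qed

lemma rslope_shift: "rslope (\<lambda>s. g (s + c)) t = rslope g (t + c)"
proof -
  have "((\<lambda>s. g (s + c)) has_real_derivative m) (at_right t) \<longleftrightarrow> (g has_real_derivative m) (at_right (t + c))"
    for m
    unfolding has_field_derivative_iff filterlim_at_right_to_0[of _ _ t] filterlim_at_right_to_0[of _ _ "t + c"]
    by (simp add: add.commute add.left_commute)
  then show ?thesis unfolding rslope_def by simp
qed

lemma lap_Ed_reverse:
  assumes "\<And>s. k1 (epos G e s) = k2 (epos G e' (L - s))"
  shows "lap G k1 (Ed e t) = lap G k2 (Ed e' (L - t))"
proof -
  have "rslope (\<lambda>s. k1 (epos G e s)) t = rslope (\<lambda>s. k2 (epos G e' (- (s + - L)))) t"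
    by (simp add: assms)
  also have "\<dots> = rslope (\<lambda>s. k2 (epos G e' (- s))) (- (L - t))"
    by (subst rslope_shift[where g = "\<lambda>s. k2 (epos G e' (- s))"]) simp
  finally have right: "rslope (\<lambda>s. k1 (epos G e s)) t = rslope (\<lambda>s. k2 (epos G e' (- s))) (- (L - t))" .
  have "rslope (\<lambda>s. k1 (epos G e (- s))) (- t) = rslope (\<lambda>s. k2 (epos G e' (s + L))) (- t)"
    by (simp add: assms add.commute)
  also have "\<dots> = rslope (\<lambda>s. k2 (epos G e' s)) (L - t)"
    by (subst rslope_shift[where g = "\<lambda>s. k2 (epos G e' s)"]) simp
  finally have "rslope (\<lambda>s. k1 (epos G e (- s))) (- t) = rslope (\<lambda>s. k2 (epos G e' s)) (L - t)" .
  with right show ?thesis by simp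
qed

lemma lap_cong:
  assumes "trop_curve G" "p \<in> pts G" "\<And>e s. e \<in> edges G \<Longrightarrow> k1 (epos G e s) = k2 (epos G e s)"
  shows "lap G k1 p = lap G k2 p"
proof (cases p)
  case (Vx v)
  have "legs G \<subseteq> edges G" by (rule trop_curve_legs_subset[OF assms(1)])
  then show ?thesis unfolding Vx using assms(3) by (auto intro!: sum.cong arg_cong2[where f = "(+)"])
next
  case (Ed e t)
  then have "e \<in> edges G" using assms(2) Ed_in_pts_iff[OF assms(1)] by auto
  then show ?thesis unfolding Ed by (simp add: assms(3))
qed

definition iota_half_edge :: "('v, 'e, 'y) rstruct_scheme \<Rightarrow> 'e \<times> bool \<Rightarrow> 'e \<times> bool" where
  "iota_half_edge R h = (iedge R (fst h), snd h \<noteq> flip R (fst h))"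

lemma iota_half_edge_in_half_edges:
  assumes "real_structure G R" "h \<in> half_edges G v"
  shows "iota_half_edge R h \<in> half_edges G (ivert R v)"
proof -
  obtain e b where h: "h = (e, b)" and e: "e \<in> edges G"
    and b: "b \<Longrightarrow> e \<notin> legs G \<and> tgt G e = v" and nb: "\<not> b \<Longrightarrow> src G e = v"
    using assms(2) unfolding half_edges_def by auto
  note r = real_structure_edgeD[OF assms(1) e]
  show ?thesis
    using h e b nb r unfolding iota_half_edge_def half_edges_def
    by (cases b; cases "flip R e") auto
qed

lemma iota_half_edge_involutive:
  assumes "real_structure G R" "h \<in> half_edges G v"
  shows "iota_half_edge R (iota_half_edge R h) = h"
  using assms real_structure_edgeD[OF assms(1)] unfolding iota_half_edge_def half_edges_def by auto

lemma half_edge_fn_iota: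
  assumes "trop_curve G" "real_structure G R" "h \<in> half_edges G v"
  shows "half_edge_fn G (\<lambda>x. k (iota G R x)) h = half_edge_fn G k (iota_half_edge R h)"
proof -
  obtain e b where h: "h = (e, b)" and e: "e \<in> edges G"
    using assms(3) unfolding half_edges_def by auto
  note r = real_structure_edgeD[OF assms(2) e]
  show ?thesis
  proof (cases "flip R e")
    case True
    then show ?thesis
      using h r iota_epos_flip[OF assms(1,2) e True] by (cases b) (simp_all add: iota_half_edge_def)
  next
    case False
    then show ?thesis
      using h r iota_epos_noflip[OF assms(2) e False] by (cases b) (simp_all add: iota_half_edge_def)
  qed
qed

lemma lap_iota:
  assumes "trop_curve G" "real_structure G R" "rational_fn G k" "p \<in> pts G"
  shows "lap G (\<lambda>x. k (iota G R x)) p = lap G k (iota G R p)"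
proof (cases p)
  case (Vx v)
  have v: "v \<in> verts G" using assms(4) Vx by (simp add: Vx_in_pts_iff)
  have "bij_betw (iota_half_edge R) (half_edges G v) (half_edges G (ivert R v))"
    using iota_half_edge_in_half_edges[OF assms(2), of _ v]
      iota_half_edge_in_half_edges[OF assms(2), of _ "ivert R v"]
      iota_half_edge_involutive[OF assms(2)] real_structure_vertD[OF assms(2) v]
    by (intro bij_betw_byWitness[where f' = "iota_half_edge R"]) auto
  then have "(\<Sum>h\<in>half_edges G v. rslope (half_edge_fn G k (iota_half_edge R h)) 0)
      = (\<Sum>h\<in>half_edges G (ivert R v). rslope (half_edge_fn G k h) 0)"
    by (rule sum.reindex_bij_betw)
  then show ?thesis
    unfolding Vx lap_Vx_half_edges[OF assms(1) rational_fn_iota[OF assms(1-3)]]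
    using lap_Vx_half_edges[OF assms(1,3)] half_edge_fn_iota[OF assms(1,2)] by simp
next
  case (Ed e t)
  then have e: "e \<in> edges G" using assms(4) Ed_in_pts_iff[OF assms(1)] by auto
  show ?thesis
  proof (cases "flip R e")
    case False
    then show ?thesis unfolding Ed using iota_epos_noflip[OF assms(2) e False] by simp
  next
    case True
    have "lap G (\<lambda>x. k (iota G R x)) (Ed e t) = lap G k (Ed (iedge R e) (len G e - t))"
      by (rule lap_Ed_reverse) (simp add: iota_epos_flip[OF assms(1,2) e True])
    with True show ?thesis unfolding Ed by simp
  qed
qed

lemma deg_eq_sum: "finite A \<Longrightarrow> {p. D p \<noteq> 0} \<subseteq> A \<Longrightarrow> deg D = sum D A"
  unfolding deg_def by (rule sum.mono_neutral_left) auto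

lemma effective_deg_0_imp_zero:
  assumes "finite {p. D p \<noteq> 0}" "effective D" "deg D = 0"
  shows "D p = 0"
proof -
  have "sum D {p. D p \<noteq> 0} = 0" using assms(3) unfolding deg_def .
  then have "\<forall>x\<in>{p. D p \<noteq> 0}. D x = 0"
    using sum_nonneg_eq_0_iff[OF assms(1), of D] assms(2) unfolding effective_def by blast
  then show ?thesis by blast
qed

definition linsys_covers :: "('v, 'e, 'z) tgraph_scheme \<Rightarrow> ('v, 'e) divisor \<Rightarrow> nat \<Rightarrow> bool" where
  "linsys_covers G D n \<longleftrightarrow>
     (\<forall>E. is_divisor G E \<and> effective E \<and> deg E = int n \<longrightarrow> (\<exists>D'\<in>linsys G D. \<forall>p. E p \<le> D' p))"

lemma linsys_covers_0:
  assumes "linsys G D \<noteq> {}" shows "linsys_covers G D 0"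
  unfolding linsys_covers_def
proof (intro allI impI)
  fix E assume E: "is_divisor G E \<and> effective E \<and> deg E = int 0"
  obtain D' where D': "D' \<in> linsys G D" using assms by blast
  have "E p = 0" for p
    by (rule effective_deg_0_imp_zero) (use E in \<open>auto simp: is_divisor_def\<close>)
  with D' show "\<exists>D'\<in>linsys G D. \<forall>p. E p \<le> D' p" unfolding linsys_def effective_def by auto
qed

lemma linsys_covers_mono:
  assumes "trop_curve G" "m \<le> n" "linsys_covers G D n"
  shows "linsys_covers G D m"
  unfolding linsys_covers_def
proof (intro allI impI)
  fix E assume E: "is_divisor G E \<and> effective E \<and> deg E = int m"
  obtain v where v: "v \<in> verts G" using assms(1) unfolding trop_curve_def by blast
  define E' where "E' = (\<lambda>p. E p + (if p = Vx v then int (n - m) else 0))"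
  have supp: "finite {p. E p \<noteq> 0}" "{p. E p \<noteq> 0} \<subseteq> pts G" using E unfolding is_divisor_def by auto
  define A where "A = insert (Vx v) {p. E p \<noteq> 0}"
  have A: "finite A" "{p. E p \<noteq> 0} \<subseteq> A" "{p. E' p \<noteq> 0} \<subseteq> A" "A \<subseteq> pts G"
    using supp v by (auto simp: A_def E'_def Vx_in_pts_iff)
  have "deg E' = sum E' A" by (rule deg_eq_sum[OF A(1,3)])
  also have "\<dots> = sum E A + sum (\<lambda>p. if p = Vx v then int (n - m) else 0) A"
    unfolding E'_def by (rule sum.distrib)
  also have "\<dots> = deg E + int (n - m)"
    using deg_eq_sum[OF A(1,2)] A(1) by (simp add: A_def)
  also have "\<dots> = int n" using E assms(2) by simp
  finally have "deg E' = int n" .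
  moreover have "is_divisor G E'" using A finite_subset unfolding is_divisor_def by blast
  moreover have "effective E'" using E unfolding effective_def E'_def by simp
  ultimately obtain D' where "D' \<in> linsys G D" "\<forall>p. E' p \<le> D' p"
    using assms(3) unfolding linsys_covers_def by blast
  moreover have "E p \<le> E' p" for p by (simp add: E'_def)
  ultimately show "\<exists>D'\<in>linsys G D. \<forall>p. E p \<le> D' p" by (meson order_trans)
qed

lemma div_dim_imp_linsys_covers:
  assumes "trop_curve G" "int r \<le> div_dim G D"
  shows "linsys_covers G D r"
proof (rule ccontr)
  assume "\<not> linsys_covers G D r"
  then have bounded: "n < r" if "linsys_covers G D n" for n
    using linsys_covers_mono[OF assms(1) _ that] by (meson not_le less_imp_le)
  have ne: "linsys G D \<noteq> {}"
  proof
    assume "linsys G D = {}"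
    then have "div_dim G D = -1" unfolding div_dim_def by simp
    with assms(2) show False by simp
  qed
  then have "div_dim G D = int (Greatest (linsys_covers G D))"
    unfolding div_dim_def linsys_covers_def by simp
  moreover have "linsys_covers G D (Greatest (linsys_covers G D))"
    by (rule GreatestI_nat[where P = "linsys_covers G D" and b = r, OF linsys_covers_0[OF ne]])
      (use bounded in fastforce)
  ultimately show False using bounded[of "Greatest (linsys_covers G D)"] assms(2) by simp
qed

definition div_plus_lap ::
  "('v, 'e, 'z) tgraph_scheme \<Rightarrow> ('v, 'e) divisor \<Rightarrow> (('v, 'e) point \<Rightarrow> real) \<Rightarrow> ('v, 'e) divisor" where
  "div_plus_lap G D h = (\<lambda>p. if p \<in> pts G then D p + \<lfloor>lap G h p\<rfloor> else 0)"

lemma div_plus_lap_eq: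
  assumes "trop_curve G" "rational_fn G h" "p \<in> pts G"
  shows "real_of_int (div_plus_lap G D h p) = D p + lap G h p"
proof -
  have "real_of_int \<lfloor>lap G h p\<rfloor> = lap G h p"
    using lap_in_Ints[OF assms] by (simp add: Ints_def)
  then show ?thesis using assms(3) by (simp add: div_plus_lap_def)
qed

lemma lin_equiv_div_plus_lap:
  assumes "trop_curve G" "rational_fn G h"
  shows "lin_equiv G D (div_plus_lap G D h)"
  unfolding lin_equiv_def using div_plus_lap_eq[OF assms] assms(2) by force

lemma is_divisor_div_plus_lap:
  assumes "trop_curve G" "rational_fn G h" "is_divisor G D"
  shows "is_divisor G (div_plus_lap G D h)"
proof -
  have "{p. div_plus_lap G D h p \<noteq> 0} \<subseteq> {p. D p \<noteq> 0} \<union> {p \<in> pts G. lap G h p \<noteq> 0}"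
    by (auto simp: div_plus_lap_def)
  moreover have "finite ({p. D p \<noteq> 0} \<union> {p \<in> pts G. lap G h p \<noteq> 0})"
    using assms(3) lap_finite_support[OF assms(1,2)] unfolding is_divisor_def by blast
  moreover have "{p. div_plus_lap G D h p \<noteq> 0} \<subseteq> pts G" by (auto simp: div_plus_lap_def)
  ultimately show ?thesis unfolding is_divisor_def by (blast intro: finite_subset)
qed

lemma real_divisor_div_plus_lap:
  assumes "trop_curve G" "real_structure G R" "rational_fn G h" "real_divisor G R D"
    and h_iota: "\<And>e s. e \<in> edges G \<Longrightarrow> h (iota G R (epos G e s)) = h (epos G e s)"
  shows "real_divisor G R (div_plus_lap G D h)"
  unfolding real_divisor_def conj_div_def
proof
  fix p assume p: "p \<in> pts G"
  have "lap G h (iota G R p) = lap G (\<lambda>x. h (iota G R x)) p"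
    by (rule lap_iota[OF assms(1-3) p, symmetric])
  also have "\<dots> = lap G h p" by (rule lap_cong[OF assms(1) p]) (rule h_iota)
  finally show "div_plus_lap G D h (iota G R p) = div_plus_lap G D h p"
    using p iota_in_pts[OF assms(1,2) p] assms(4) unfolding real_divisor_def conj_div_def
    by (simp add: div_plus_lap_def)
qed

lemma lap_max_ge:
  assumes "trop_curve G" "rational_fn G f" "rational_fn G g" "p \<in> pts G"
  shows "lap G f p \<le> lap G (\<lambda>x. max (f x) (g x)) p \<or> lap G g p \<le> lap G (\<lambda>x. max (f x) (g x)) p"
  using lap_mono_touching[OF assms(1,2) rational_fn_max[OF assms(1-3)] _ assms(4)]
    lap_mono_touching[OF assms(1,3) rational_fn_max[OF assms(1-3)] _ assms(4)]
  by (cases "g p \<le> f p") auto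

lemma div_plus_lap_max_iota_ge:
  assumes "trop_curve G" "real_structure G R" "rational_fn G f" "real_divisor G R D" "p \<in> pts G"
    and Df: "\<And>p. p \<in> pts G \<Longrightarrow> real_of_int (D1 p - D p) = lap G f p"
  shows "D1 p \<le> div_plus_lap G D (\<lambda>x. max (f x) (f (iota G R x))) p
    \<or> D1 (iota G R p) \<le> div_plus_lap G D (\<lambda>x. max (f x) (f (iota G R x))) p"
proof -
  note tc = assms(1) and rs = assms(2) and f = assms(3) and p = assms(5)
  let ?h = "\<lambda>x. max (f x) (f (iota G R x))"
  have h: "rational_fn G ?h" by (rule rational_fn_max[OF tc f rational_fn_iota[OF tc rs f]])
  have "lap G f p \<le> lap G ?h p \<or> lap G f (iota G R p) \<le> lap G ?h p"
    using lap_max_ge[OF tc f rational_fn_iota[OF tc rs f] p] lap_iota[OF tc rs f p] by simp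
  moreover have "D (iota G R p) = D p"
    using assms(4) p unfolding real_divisor_def conj_div_def by simp
  ultimately have "real_of_int (D1 p) \<le> div_plus_lap G D ?h p
      \<or> real_of_int (D1 (iota G R p)) \<le> div_plus_lap G D ?h p"
    using Df[OF p] Df[OF iota_in_pts[OF tc rs p]] div_plus_lap_eq[OF tc h p, of D] by auto
  then show ?thesis by simp
qed

lemma real_divisor_in_linsys_above:
  assumes "trop_curve G" "real_structure G R" "is_divisor G D" "real_divisor G R D"
    and "D1 \<in> linsys G D" "real_divisor G R E" "\<forall>p. E p \<le> D1 p"
  shows "\<exists>D'\<in>linsys G D. real_divisor G R D' \<and> (\<forall>p. E p \<le> D' p)"
proof -
  note tc = assms(1) and rs = assms(2)
  have D1: "is_divisor G D1" "effective D1" "lin_equiv G D D1" using assms(5) unfolding linsys_def by auto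
  then obtain f where f: "rational_fn G f" and Df: "\<And>p. p \<in> pts G \<Longrightarrow> real_of_int (D1 p - D p) = lap G f p"
    unfolding lin_equiv_def by blast
  define h where "h x = max (f x) (f (iota G R x))" for x
  have h: "rational_fn G h" unfolding h_def by (rule rational_fn_max[OF tc f rational_fn_iota[OF tc rs f]])
  define D' where "D' = div_plus_lap G D h"
  have iota_fixed: "X (iota G R p) = X p" if "real_divisor G R X" "p \<in> pts G" for X p
    using that unfolding real_divisor_def conj_div_def by simp
  have above: "D1 p \<le> D' p \<or> D1 (iota G R p) \<le> D' p" if "p \<in> pts G" for p
    unfolding D'_def h_def by (rule div_plus_lap_max_iota_ge[OF tc rs f assms(4) that Df])
  have "E p \<le> D' p \<and> 0 \<le> D' p" for p
  proof (cases "p \<in> pts G")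
    case True
    then show ?thesis
      using above[OF True] assms(7) D1(2) iota_fixed[OF assms(6) True] unfolding effective_def
      by (metis order_trans)
  next
    case False
    then have "D1 p = 0" using D1(1) unfolding is_divisor_def by blast
    then show ?thesis using False assms(7)[rule_format, of p] by (simp add: D'_def div_plus_lap_def)
  qed
  moreover have "D' \<in> linsys G D"
    using calculation is_divisor_div_plus_lap[OF tc h assms(3)] lin_equiv_div_plus_lap[OF tc h, of D]
    unfolding linsys_def effective_def D'_def by simp
  moreover have "real_divisor G R D'"
    unfolding D'_def
  proof (rule real_divisor_div_plus_lap[OF tc rs h assms(4)])
    fix e s assume "e \<in> edges G"
    then show "h (iota G R (epos G e s)) = h (epos G e s)"
      unfolding h_def using iota_iota_epos[OF tc rs] by (simp add: max.commute)
  qed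
  ultimately show ?thesis by blast
qed

theorem proposition6:
  fixes G :: "('v, 'e) tgraph" and R :: "('v, 'e) rstruct"
    and D :: "('v, 'e) divisor" and r :: nat
  assumes "trop_curve G"
    and "real_structure G R"
    and "is_divisor G D" and "real_divisor G R D"
    and "1 \<le> r" and "int r \<le> div_dim G D"
  shows "\<forall>E. is_divisor G E \<and> effective E \<and> real_divisor G R E \<and> deg E = int r \<longrightarrow>
           (\<exists>D'\<in>linsys G D. real_divisor G R D' \<and> (\<forall>p. E p \<le> D' p))"
proof (intro allI impI)
  fix E assume E: "is_divisor G E \<and> effective E \<and> real_divisor G R E \<and> deg E = int r"
  then obtain D1 where "D1 \<in> linsys G D" "\<forall>p. E p \<le> D1 p"
    using div_dim_imp_linsys_covers[OF assms(1,6)] unfolding linsys_covers_def by blast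
  then show "\<exists>D'\<in>linsys G D. real_divisor G R D' \<and> (\<forall>p. E p \<le> D' p)"
    using real_divisor_in_linsys_above[OF assms(1-4)] E by blast
qed

end
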